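(* Let $(b,c)$ be a connected canonically compactifiable weighted graph over $X$, and let $K$ and $j:X\to K$ be as in the context. Then $j(X)$ is a dense open subset of $K$; in fact, for every $x\in X$ the singleton $\{j(x)\}$ is open in $K$.
   Context: Let $X$ be a countably infinite set. A weighted graph $(b,c)$ over $X$ consists of a symmetric $b:X\times X\to[0,\infty)$ with $b(x,x)=0$ and $\sum_{y}b(x,y)<\infty$ for all $x$, and $c:X\to[0,\infty)$; it is connected if any two distinct vertices are joined by a finite sequence of pairwise distinct vertices with consecutive ones satisfying $b>0$. Let $\widetilde Q(f)=\frac12\sum_{x,y}b(x,y)|f(x)-f(y)|^2+\sum_x c(x)|f(x)|^2$ and $\widetilde D=\{f:X\to\mathbb C:\widetilde Q(f)<\infty\}$. The graph is canonically compactifiable if $\widetilde D\subseteq\ell^\infty(X)$; then $\widetilde D$ is an algebra. Let $\mathcal A$ be the sup-norm closure of $\widetilde D$ in $\ell^\infty(X)$ and $\mathcal A^+$ the smallest $C^*$-subalgebra of $\ell^\infty(X)$ containing $\mathcal A$ and the constant function $1$. Let $K$ be the set of characters (nonzero multiplicative linear functionals $\mathcal A^+\to\mathbb C$) with the weak-$*$ topology, a compact Hausdorff space. Define $j:X\to K$ by $j(x)=\delta_x$, $\delta_x(f)=f(x)$. *)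

theory Defs
  imports "HOL-Analysis.Analysis"
begin

text \<open>The countably infinite vertex set X is modelled as a type 'a of class countable
  with infinite UNIV. Complex functions on X are of type 'a \<Rightarrow> complex.\<close>

definition weighted_graph :: "('a \<Rightarrow> 'a \<Rightarrow> real) \<Rightarrow> ('a \<Rightarrow> real) \<Rightarrow> bool" where
  "weighted_graph b c \<longleftrightarrow>
     (\<forall>x y. b x y \<ge> 0) \<and> (\<forall>x y. b x y = b y x) \<and> (\<forall>x. b x x = 0) \<and>
     (\<forall>x. (b x) summable_on UNIV) \<and> (\<forall>x. c x \<ge> 0)"

definition graph_connected :: "('a \<Rightarrow> 'a \<Rightarrow> real) \<Rightarrow> bool" where
  "graph_connected b \<longleftrightarrow>
     (\<forall>x y. x \<noteq> y \<longrightarrow> (\<exists>ps. ps \<noteq> [] \<and> distinct ps \<and> hd ps = x \<and> last ps = y \<and>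
        (\<forall>i. Suc i < length ps \<longrightarrow> b (ps ! i) (ps ! Suc i) > 0)))"

text \<open>Q~(f) < \<infinity>: both nonnegative series are summable.\<close>
definition form_domain :: "('a \<Rightarrow> 'a \<Rightarrow> real) \<Rightarrow> ('a \<Rightarrow> real) \<Rightarrow> ('a \<Rightarrow> complex) set" where
  "form_domain b c = {f.
     (\<lambda>(x, y). b x y * (cmod (f x - f y))\<^sup>2) summable_on UNIV \<and>
     (\<lambda>x. c x * (cmod (f x))\<^sup>2) summable_on UNIV}"

definition linfty :: "('a \<Rightarrow> complex) set" where
  "linfty = {f. bounded (range f)}"

definition canonically_compactifiable :: "('a \<Rightarrow> 'a \<Rightarrow> real) \<Rightarrow> ('a \<Rightarrow> real) \<Rightarrow> bool" where
  "canonically_compactifiable b c \<longleftrightarrow> form_domain b c \<subseteq> linfty"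

definition sup_closure :: "('a \<Rightarrow> complex) set \<Rightarrow> ('a \<Rightarrow> complex) set" where
  "sup_closure S = {f \<in> linfty. \<forall>e>0. \<exists>g\<in>S. \<forall>x. cmod (f x - g x) < e}"

definition cstar_subalgebra :: "('a \<Rightarrow> complex) set \<Rightarrow> bool" where
  "cstar_subalgebra B \<longleftrightarrow> B \<subseteq> linfty \<and> (\<lambda>_. 0) \<in> B \<and>
     (\<forall>f\<in>B. \<forall>g\<in>B. (\<lambda>x. f x + g x) \<in> B) \<and>
     (\<forall>f\<in>B. \<forall>a. (\<lambda>x. a * f x) \<in> B) \<and>
     (\<forall>f\<in>B. \<forall>g\<in>B. (\<lambda>x. f x * g x) \<in> B) \<and>
     (\<forall>f\<in>B. (\<lambda>x. cnj (f x)) \<in> B) \<and>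
     sup_closure B \<subseteq> B"

definition algA :: "('a \<Rightarrow> 'a \<Rightarrow> real) \<Rightarrow> ('a \<Rightarrow> real) \<Rightarrow> ('a \<Rightarrow> complex) set" where
  "algA b c = sup_closure (form_domain b c)"

definition algA_plus :: "('a \<Rightarrow> 'a \<Rightarrow> real) \<Rightarrow> ('a \<Rightarrow> real) \<Rightarrow> ('a \<Rightarrow> complex) set" where
  "algA_plus b c = \<Inter>{B. cstar_subalgebra B \<and> algA b c \<subseteq> B \<and> (\<lambda>_. 1) \<in> B}"

text \<open>Characters of a subalgebra B, represented as extensional functions on B
  (value undefined outside B), so they live in the product space.\<close>
definition characters :: "('a \<Rightarrow> complex) set \<Rightarrow> (('a \<Rightarrow> complex) \<Rightarrow> complex) set" where
  "characters B = {\<phi> \<in> extensional B.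
     (\<forall>f\<in>B. \<forall>g\<in>B. \<phi> (\<lambda>x. f x + g x) = \<phi> f + \<phi> g) \<and>
     (\<forall>f\<in>B. \<forall>a. \<phi> (\<lambda>x. a * f x) = a * \<phi> f) \<and>
     (\<forall>f\<in>B. \<forall>g\<in>B. \<phi> (\<lambda>x. f x * g x) = \<phi> f * \<phi> g) \<and>
     (\<exists>f\<in>B. \<phi> f \<noteq> 0)}"

definition weak_star_top :: "('a \<Rightarrow> complex) set \<Rightarrow> (('a \<Rightarrow> complex) \<Rightarrow> complex) topology" where
  "weak_star_top B = subtopology (product_topology (\<lambda>_. euclidean) B) (characters B)"

definition char_space :: "('a \<Rightarrow> 'a \<Rightarrow> real) \<Rightarrow> ('a \<Rightarrow> real) \<Rightarrow> (('a \<Rightarrow> complex) \<Rightarrow> complex) topology" where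
  "char_space b c = weak_star_top (algA_plus b c)"

definition jmap :: "('a \<Rightarrow> 'a \<Rightarrow> real) \<Rightarrow> ('a \<Rightarrow> real) \<Rightarrow> 'a \<Rightarrow> (('a \<Rightarrow> complex) \<Rightarrow> complex)" where
  "jmap b c x = restrict (\<lambda>f. f x) (algA_plus b c)"

end

(*
  Evaluation at a vertex x is a character, and since the indicator e of {x} has finite energy it
  lies in A+; a character sending the idempotent e close to 1 sends it to 1 and then agrees with
  evaluation at x, which makes the singleton of that evaluation weak-* open. For density, a
  character phi that stays away from all evaluations on finitely many f in A would make the
  function sum |f - phi f|^2 bounded below, hence invertible in the C*-algebra A+ (Neumann series),
  although phi annihilates it.
*)

theory Submission
  imports Defs
begin

lemma linftyI: "(\<And>x. cmod (f x) \<le> K) \<Longrightarrow> f \<in> linfty"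
  unfolding linfty_def bounded_iff by auto

lemma linftyE:
  assumes "f \<in> linfty"
  obtains K where "\<And>x. cmod (f x) \<le> K"
  using assms unfolding linfty_def bounded_iff by auto

lemma sup_closure_mono: "S \<subseteq> T \<Longrightarrow> sup_closure S \<subseteq> sup_closure T"
  unfolding sup_closure_def by blast

lemma sup_closure_superset: "f \<in> S \<Longrightarrow> f \<in> linfty \<Longrightarrow> f \<in> sup_closure S"
  unfolding sup_closure_def by force

lemma cstar_subalgebra_linfty: "cstar_subalgebra linfty"
  unfolding cstar_subalgebra_def
proof (intro conjI ballI allI)
  fix f g :: "'a \<Rightarrow> complex"
  assume "f \<in> linfty" "g \<in> linfty"
  then obtain K L where K: "\<And>x. cmod (f x) \<le> K" and L: "\<And>x. cmod (g x) \<le> L"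
    by (meson linftyE)
  show "(\<lambda>x. f x + g x) \<in> linfty"
    by (rule linftyI[of _ "K + L"]) (meson K L add_mono norm_triangle_ineq order_trans)
  show "(\<lambda>x. f x * g x) \<in> linfty"
  proof (rule linftyI[of _ "K * L"])
    fix x
    have "cmod (f x) * cmod (g x) \<le> K * L"
      using K L by (meson mult_mono norm_ge_zero order_trans)
    then show "cmod (f x * g x) \<le> K * L" by (simp add: norm_mult)
  qed
next
  fix f :: "'a \<Rightarrow> complex" and a
  assume "f \<in> linfty"
  then obtain K where K: "\<And>x. cmod (f x) \<le> K" using linftyE by blast
  show "(\<lambda>x. a * f x) \<in> linfty"
    by (rule linftyI[of _ "cmod a * K"]) (simp add: norm_mult K mult_left_mono)
  show "(\<lambda>x. cnj (f x)) \<in> linfty"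
    by (rule linftyI[of _ K]) (simp add: K)
qed (auto simp: sup_closure_def intro: linftyI[of _ 0])

lemma cstar_subalgebra_Inter:
  assumes "\<And>B. B \<in> \<B> \<Longrightarrow> cstar_subalgebra B" and "\<B> \<noteq> {}"
  shows "cstar_subalgebra (\<Inter>\<B>)"
proof (unfold cstar_subalgebra_def, intro conjI ballI allI)
  show "sup_closure (\<Inter>\<B>) \<subseteq> \<Inter>\<B>"
  proof
    fix f assume f: "f \<in> sup_closure (\<Inter>\<B>)"
    show "f \<in> \<Inter>\<B>"
    proof
      fix B assume "B \<in> \<B>"
      then show "f \<in> B"
        using f sup_closure_mono[of "\<Inter>\<B>" B] assms(1)[of B]
        unfolding cstar_subalgebra_def by blast
    qed
  qed
qed (use assms in \<open>fastforce simp: cstar_subalgebra_def\<close>)+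

context
  fixes A :: "('a \<Rightarrow> complex) set"
  assumes A: "cstar_subalgebra A"
begin

lemma cstar_subalgebra_zero: "(\<lambda>_. 0) \<in> A"
  and cstar_subalgebra_add: "f \<in> A \<Longrightarrow> g \<in> A \<Longrightarrow> (\<lambda>x. f x + g x) \<in> A"
  and cstar_subalgebra_scale: "f \<in> A \<Longrightarrow> (\<lambda>x. a * f x) \<in> A"
  and cstar_subalgebra_mult: "f \<in> A \<Longrightarrow> g \<in> A \<Longrightarrow> (\<lambda>x. f x * g x) \<in> A"
  and cstar_subalgebra_cnj: "f \<in> A \<Longrightarrow> (\<lambda>x. cnj (f x)) \<in> A"
  and cstar_subalgebra_sup_closure: "f \<in> sup_closure A \<Longrightarrow> f \<in> A"
  and cstar_subalgebra_bounded: "f \<in> A \<Longrightarrow> f \<in> linfty"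
  using A unfolding cstar_subalgebra_def by blast+

lemma cstar_subalgebra_sum:
  "finite I \<Longrightarrow> (\<And>i. i \<in> I \<Longrightarrow> f i \<in> A) \<Longrightarrow> (\<lambda>x. \<Sum>i\<in>I. f i x) \<in> A"
  by (induction I rule: finite_induct) (simp_all add: cstar_subalgebra_zero cstar_subalgebra_add)

context
  assumes one: "(\<lambda>_. 1) \<in> A"
begin

lemma cstar_subalgebra_power: "f \<in> A \<Longrightarrow> (\<lambda>x. f x ^ n) \<in> A"
  by (induction n) (simp_all add: one cstar_subalgebra_mult)

text \<open>Neumann series: the partial sums of \<open>\<Sum> h\<^sup>k\<close> converge uniformly to \<open>1 / (1 - h)\<close>
  because \<open>h\<close> stays uniformly below 1.\<close>
lemma cstar_subalgebra_inverse_one_minus: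
  fixes h :: "'a \<Rightarrow> real"
  assumes hA: "(\<lambda>x. complex_of_real (h x)) \<in> A"
    and h_nonneg: "\<And>x. 0 \<le> h x" and h_le: "\<And>x. h x \<le> q" and "q < 1"
  shows "(\<lambda>x. complex_of_real (1 / (1 - h x))) \<in> A"
proof (rule cstar_subalgebra_sup_closure, unfold sup_closure_def, intro CollectI conjI allI impI)
  have q: "0 \<le> q" "q < 1" using h_nonneg[THEN order_trans, OF h_le] \<open>q < 1\<close> by auto
  have bound: "1 / (1 - h x) \<le> 1 / (1 - q)" for x
    using h_le[of x] q by (simp add: frac_le)
  show "(\<lambda>x. complex_of_real (1 / (1 - h x))) \<in> linfty"
  proof (rule linftyI)
    fix x
    have "0 < 1 / (1 - h x)" using h_le[of x] q by simp
    then show "cmod (complex_of_real (1 / (1 - h x))) \<le> 1 / (1 - q)"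
      by (simp only: norm_of_real abs_of_pos bound)
  qed
  fix e :: real
  assume "e > 0"
  then obtain N where N: "q ^ N < e * (1 - q)"
    using real_arch_pow_inv[of "e * (1 - q)" q] q by auto
  show "\<exists>g\<in>A. \<forall>x. cmod (complex_of_real (1 / (1 - h x)) - g x) < e"
  proof (intro bexI allI)
    fix x
    have "h x < 1" using h_le[of x] q by simp
    then have "1 / (1 - h x) - (\<Sum>k<N. h x ^ k) = h x ^ N / (1 - h x)"
      by (simp add: sum_gp_strict field_simps)
    also have "\<dots> \<le> q ^ N / (1 - q)"
      using h_nonneg[of x] h_le[of x] q by (intro frac_le power_mono) auto
    also have "\<dots> < e" using N q by (simp add: field_simps)
    finally have "1 / (1 - h x) - (\<Sum>k<N. h x ^ k) < e" .
    moreover have "0 \<le> 1 / (1 - h x) - (\<Sum>k<N. h x ^ k)"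
      using \<open>1 / (1 - h x) - (\<Sum>k<N. h x ^ k) = h x ^ N / (1 - h x)\<close> h_nonneg[of x] \<open>h x < 1\<close>
      by simp
    moreover have "complex_of_real (1 / (1 - h x)) - (\<Sum>k<N. complex_of_real (h x) ^ k)
        = complex_of_real (1 / (1 - h x) - (\<Sum>k<N. h x ^ k))"
      by simp
    ultimately show "cmod (complex_of_real (1 / (1 - h x)) - (\<Sum>k<N. complex_of_real (h x) ^ k)) < e"
      by (simp only: norm_of_real abs_of_nonneg)
  qed (intro cstar_subalgebra_sum cstar_subalgebra_power hA; simp)
qed

lemma cstar_subalgebra_inverse:
  fixes g :: "'a \<Rightarrow> real"
  assumes gA: "(\<lambda>x. complex_of_real (g x)) \<in> A" and "\<delta> > 0" and g_ge: "\<And>x. \<delta> \<le> g x"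
  shows "(\<lambda>x. complex_of_real (1 / g x)) \<in> A"
proof -
  obtain M where M: "\<And>x. g x \<le> M"
    using linftyE[OF cstar_subalgebra_bounded[OF gA]] by (metis norm_of_real abs_le_D1)
  have "\<delta> \<le> M" using g_ge M order_trans by blast
  then have "M > 0" using \<open>\<delta> > 0\<close> by linarith
  text \<open>Rescale so that \<open>g = M (1 - h)\<close> with \<open>0 \<le> h \<le> 1 - \<delta>/M\<close>.\<close>
  define h where "h x = 1 - g x / M" for x
  have h_eq: "(\<lambda>x. complex_of_real (h x)) = (\<lambda>x. 1 + (- complex_of_real (1 / M)) * complex_of_real (g x))"
    by (simp add: fun_eq_iff h_def)
  have hA: "(\<lambda>x. complex_of_real (h x)) \<in> A"
    unfolding h_eq by (intro cstar_subalgebra_add one cstar_subalgebra_scale gA)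
  have "\<delta> / M \<le> g x / M" "g x / M \<le> 1" for x
    using g_ge M \<open>M > 0\<close> by (simp_all add: divide_right_mono)
  then have "(\<lambda>x. complex_of_real (1 / (1 - h x))) \<in> A"
    using \<open>\<delta> > 0\<close> \<open>M > 0\<close>
    by (intro cstar_subalgebra_inverse_one_minus[OF hA, of "1 - \<delta> / M"]) (simp_all add: h_def)
  then have "(\<lambda>x. complex_of_real (1 / M) * complex_of_real (1 / (1 - h x))) \<in> A"
    by (rule cstar_subalgebra_scale)
  moreover have "1 / M * (1 / (1 - h x)) = 1 / g x" for x
    using \<open>M > 0\<close> by (simp add: h_def)
  ultimately show ?thesis by (simp only: of_real_mult[symmetric])
qed

lemma evaluation_in_characters: "restrict (\<lambda>f. f x) A \<in> characters A"
  using A one unfolding characters_def cstar_subalgebra_def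
  by (auto intro!: bexI[of _ "\<lambda>_. 1"])

end

end

lemma character_add: "\<phi> \<in> characters A \<Longrightarrow> f \<in> A \<Longrightarrow> g \<in> A \<Longrightarrow> \<phi> (\<lambda>x. f x + g x) = \<phi> f + \<phi> g"
  and character_scale: "\<phi> \<in> characters A \<Longrightarrow> f \<in> A \<Longrightarrow> \<phi> (\<lambda>x. a * f x) = a * \<phi> f"
  and character_mult: "\<phi> \<in> characters A \<Longrightarrow> f \<in> A \<Longrightarrow> g \<in> A \<Longrightarrow> \<phi> (\<lambda>x. f x * g x) = \<phi> f * \<phi> g"
  unfolding characters_def by blast+

context
  fixes A :: "('a \<Rightarrow> complex) set" and \<phi>
  assumes A: "cstar_subalgebra A" and one: "(\<lambda>_. 1) \<in> A" and \<phi>: "\<phi> \<in> characters A"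
begin

lemma character_const: "\<phi> (\<lambda>_. a) = a"
proof -
  obtain f where "f \<in> A" "\<phi> f \<noteq> 0" using \<phi> unfolding characters_def by blast
  then have "\<phi> (\<lambda>_. 1) = 1"
    using character_mult[OF \<phi> \<open>f \<in> A\<close> one] by simp
  then show ?thesis using character_scale[OF \<phi> one, of a] by simp
qed

lemma character_sum:
  "finite I \<Longrightarrow> (\<And>i. i \<in> I \<Longrightarrow> f i \<in> A) \<Longrightarrow> \<phi> (\<lambda>x. \<Sum>i\<in>I. f i x) = (\<Sum>i\<in>I. \<phi> (f i))"
proof (induction I rule: finite_induct)
  case (insert i I)
  then show ?case
    using character_add[OF \<phi>, of "f i" "\<lambda>x. \<Sum>i\<in>I. f i x"] cstar_subalgebra_sum[OF A, of I f]
    by simp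
qed (simp add: character_const)

lemma character_kills_deviation:
  assumes "f \<in> A"
  shows "(\<lambda>x. f x - \<phi> f) \<in> A" and "\<phi> (\<lambda>x. f x - \<phi> f) = 0"
proof -
  have eq: "(\<lambda>x. f x - \<phi> f) = (\<lambda>x. f x + (- \<phi> f) * 1)" by simp
  show "(\<lambda>x. f x - \<phi> f) \<in> A"
    unfolding eq by (intro cstar_subalgebra_add[OF A] cstar_subalgebra_scale[OF A] assms one)
  have "\<phi> (\<lambda>x. f x + (- \<phi> f) * 1) = \<phi> f + \<phi> (\<lambda>x. (- \<phi> f) * 1)"
    by (rule character_add[OF \<phi> assms cstar_subalgebra_scale[OF A one]])
  also have "\<dots> = 0" using character_const[of "- \<phi> f"] by simp
  finally show "\<phi> (\<lambda>x. f x - \<phi> f) = 0" by (simp only: eq)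
qed

lemma character_approx_by_evaluation:
  assumes "finite F" and "F \<subseteq> A" and "\<epsilon> > 0"
  shows "\<exists>x. \<forall>f\<in>F. cmod (f x - \<phi> f) < \<epsilon>"
proof (rule ccontr)
  assume "\<nexists>x. \<forall>f\<in>F. cmod (f x - \<phi> f) < \<epsilon>"
  then have far: "\<exists>f\<in>F. \<epsilon> \<le> cmod (f x - \<phi> f)" for x by (auto simp: not_less)
  define r where "r x = (\<Sum>f\<in>F. (cmod (f x - \<phi> f))\<^sup>2)" for x
  have r_eq: "(\<lambda>x. complex_of_real (r x)) = (\<lambda>x. \<Sum>f\<in>F. (f x - \<phi> f) * cnj (f x - \<phi> f))"
    by (intro ext) (simp only: r_def of_real_sum complex_norm_square)
  have square_dev: "(\<lambda>x. (f x - \<phi> f) * cnj (f x - \<phi> f)) \<in> A"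
      "\<phi> (\<lambda>x. (f x - \<phi> f) * cnj (f x - \<phi> f)) = 0" if "f \<in> F" for f
  proof -
    have dev: "(\<lambda>x. f x - \<phi> f) \<in> A" "\<phi> (\<lambda>x. f x - \<phi> f) = 0"
      using character_kills_deviation[of f] that \<open>F \<subseteq> A\<close> by auto
    have dev_cnj: "(\<lambda>x. cnj (f x - \<phi> f)) \<in> A" by (rule cstar_subalgebra_cnj[OF A dev(1)])
    show "(\<lambda>x. (f x - \<phi> f) * cnj (f x - \<phi> f)) \<in> A"
      by (rule cstar_subalgebra_mult[OF A dev(1) dev_cnj])
    show "\<phi> (\<lambda>x. (f x - \<phi> f) * cnj (f x - \<phi> f)) = 0"
      by (simp only: character_mult[OF \<phi> dev(1) dev_cnj] dev(2) mult_zero_left)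
  qed
  have rA: "(\<lambda>x. complex_of_real (r x)) \<in> A" and r_kernel: "\<phi> (\<lambda>x. complex_of_real (r x)) = 0"
    unfolding r_eq
    using cstar_subalgebra_sum[OF A \<open>finite F\<close>, of "\<lambda>f x. (f x - \<phi> f) * cnj (f x - \<phi> f)"]
      character_sum[OF \<open>finite F\<close>, of "\<lambda>f x. (f x - \<phi> f) * cnj (f x - \<phi> f)"] square_dev
    by simp_all
  have r_ge: "\<epsilon>\<^sup>2 \<le> r x" for x
  proof -
    obtain f where "f \<in> F" "\<epsilon> \<le> cmod (f x - \<phi> f)" using far by blast
    then have "\<epsilon>\<^sup>2 \<le> (cmod (f x - \<phi> f))\<^sup>2" using \<open>\<epsilon> > 0\<close> by (simp add: power_mono)
    also have "\<dots> \<le> r x" unfolding r_def by (rule member_le_sum) (simp_all add: \<open>f \<in> F\<close> \<open>finite F\<close>)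
    finally show ?thesis .
  qed
  have inv_rA: "(\<lambda>x. complex_of_real (1 / r x)) \<in> A"
    using cstar_subalgebra_inverse[OF A one rA, of "\<epsilon>\<^sup>2"] r_ge \<open>\<epsilon> > 0\<close> by simp
  have "r x \<noteq> 0" for x
    using r_ge[of x] \<open>\<epsilon> > 0\<close> by (metis zero_less_power2 order_less_le_trans less_irrefl)
  then have "(\<lambda>x. complex_of_real (r x) * complex_of_real (1 / r x)) = (\<lambda>_. 1)"
    by (simp add: fun_eq_iff)
  then have "1 = \<phi> (\<lambda>x. complex_of_real (r x)) * \<phi> (\<lambda>x. complex_of_real (1 / r x))"
    using character_mult[OF \<phi> rA inv_rA] character_const[of 1] by simp
  then show False using r_kernel by simp
qed

end

lemma topspace_weak_star_top: "topspace (weak_star_top A) = characters A"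
  unfolding weak_star_top_def characters_def by (auto simp: PiE_def)

lemma weak_star_top_neighbourhood:
  assumes "openin (weak_star_top A) T" and "\<phi> \<in> T"
  obtains F \<epsilon> where "finite F" "F \<subseteq> A" "\<epsilon> > 0"
    "\<And>\<psi>. \<psi> \<in> characters A \<Longrightarrow> \<forall>f\<in>F. cmod (\<psi> f - \<phi> f) < \<epsilon> \<Longrightarrow> \<psi> \<in> T"
proof -
  obtain T' where T': "openin (product_topology (\<lambda>_. euclidean) A) T'" and T: "T = T' \<inter> characters A"
    using assms(1) unfolding weak_star_top_def openin_subtopology by blast
  have "\<phi> \<in> T'" using T \<open>\<phi> \<in> T\<close> by blast
  then obtain U where fin: "finite {f \<in> A. U f \<noteq> UNIV}" and U_open: "\<forall>f\<in>A. open (U f)"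
      and \<phi>U: "\<phi> \<in> Pi\<^sub>E A U" and UT': "Pi\<^sub>E A U \<subseteq> T'"
    using T' unfolding openin_product_topology_alt by auto
  define F where "F = {f \<in> A. U f \<noteq> UNIV}"
  have "\<exists>d>0. ball (\<phi> f) d \<subseteq> U f" if "f \<in> F" for f
  proof -
    have "f \<in> A" using that by (simp add: F_def)
    then have "open (U f)" "\<phi> f \<in> U f" using U_open \<phi>U by (auto simp: PiE_iff)
    then show ?thesis by (simp add: open_contains_ball)
  qed
  then obtain d where d: "\<And>f. f \<in> F \<Longrightarrow> d f > 0 \<and> ball (\<phi> f) (d f) \<subseteq> U f"
    by metis
  define \<epsilon> where "\<epsilon> = Min (insert 1 (d ` F))"
  have "finite F" using fin by (simp add: F_def)
  show thesis
  proof
    show "finite F" by fact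
    show "F \<subseteq> A" by (auto simp: F_def)
    show "\<epsilon> > 0" unfolding \<epsilon>_def using \<open>finite F\<close> d by (auto simp: Min_gr_iff)
    fix \<psi> assume \<psi>: "\<psi> \<in> characters A" and close: "\<forall>f\<in>F. cmod (\<psi> f - \<phi> f) < \<epsilon>"
    have "\<psi> f \<in> U f" if "f \<in> A" for f
    proof (cases "f \<in> F")
      case True
      have "\<epsilon> \<le> d f" unfolding \<epsilon>_def using \<open>finite F\<close> True by (auto intro: Min_le)
      then have "\<psi> f \<in> ball (\<phi> f) (d f)"
        using close True by (force simp: dist_norm norm_minus_commute)
      then show ?thesis using d[OF True] by blast
    qed (use that in \<open>simp add: F_def\<close>)
    then have "\<psi> \<in> Pi\<^sub>E A U" using \<psi> by (simp add: characters_def PiE_iff)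
    then show "\<psi> \<in> T" using UT' \<psi> T by blast
  qed
qed

context
  fixes A :: "('a \<Rightarrow> complex) set"
  assumes A: "cstar_subalgebra A" and one: "(\<lambda>_. 1) \<in> A"
begin

lemma closure_of_evaluations:
  "weak_star_top A closure_of range (\<lambda>x. restrict (\<lambda>f. f x) A) = topspace (weak_star_top A)"
proof (rule antisym[OF closure_of_subset_topspace], rule subsetI)
  fix \<phi> assume "\<phi> \<in> topspace (weak_star_top A)"
  then have \<phi>: "\<phi> \<in> characters A" by (simp add: topspace_weak_star_top)
  show "\<phi> \<in> weak_star_top A closure_of range (\<lambda>x. restrict (\<lambda>f. f x) A)"
    unfolding in_closure_of
  proof (intro conjI allI impI)
    show "\<phi> \<in> topspace (weak_star_top A)" using \<phi> by (simp add: topspace_weak_star_top)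
    fix T assume "\<phi> \<in> T \<and> openin (weak_star_top A) T"
    then obtain F \<epsilon> where "finite F" "F \<subseteq> A" "\<epsilon> > 0"
      and nhd: "\<And>\<psi>. \<psi> \<in> characters A \<Longrightarrow> \<forall>f\<in>F. cmod (\<psi> f - \<phi> f) < \<epsilon> \<Longrightarrow> \<psi> \<in> T"
      by (metis weak_star_top_neighbourhood)
    obtain x where "\<forall>f\<in>F. cmod (f x - \<phi> f) < \<epsilon>"
      using character_approx_by_evaluation[OF A one \<phi> \<open>finite F\<close> \<open>F \<subseteq> A\<close> \<open>\<epsilon> > 0\<close>] by blast
    then have "\<forall>f\<in>F. cmod (restrict (\<lambda>f. f x) A f - \<phi> f) < \<epsilon>"
      using \<open>F \<subseteq> A\<close> by auto
    then have "restrict (\<lambda>f. f x) A \<in> T"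
      by (rule nhd[OF evaluation_in_characters[OF A one]])
    then show "\<exists>\<psi>. \<psi> \<in> range (\<lambda>x. restrict (\<lambda>f. f x) A) \<and> \<psi> \<in> T" by blast
  qed
qed

lemma openin_weak_star_top_evaluation:
  assumes e: "(\<lambda>y. if y = x then 1 else 0) \<in> A"
  shows "openin (weak_star_top A) {restrict (\<lambda>f. f x) A}"
proof -
  let ?e = "\<lambda>y. if y = x then 1 else 0 :: complex"
  let ?P = "product_topology (\<lambda>_. euclidean) A :: (('a \<Rightarrow> complex) \<Rightarrow> complex) topology"
  let ?U = "{\<psi> \<in> topspace ?P. \<psi> ?e \<in> ball 1 (1/2)}"
  have "openin ?P ?U"
    by (rule openin_continuous_map_preimage[OF continuous_map_product_projection[OF e]]) simp
  moreover have "{restrict (\<lambda>f. f x) A} = ?U \<inter> characters A"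
  proof (intro equalityI subsetI)
    fix \<psi> assume "\<psi> \<in> {restrict (\<lambda>f. f x) A}"
    moreover have "restrict (\<lambda>f. f x) A \<in> characters A"
      by (rule evaluation_in_characters[OF A one])
    moreover have "restrict (\<lambda>f. f x) A ?e = 1" using e by simp
    ultimately show "\<psi> \<in> ?U \<inter> characters A"
      by (simp add: characters_def PiE_def)
  next
    fix \<psi> assume \<psi>U: "\<psi> \<in> ?U \<inter> characters A"
    then have \<psi>: "\<psi> \<in> characters A" by blast
    have "(\<lambda>y. ?e y * ?e y) = ?e" by (simp add: fun_eq_iff)
    then have "\<psi> ?e = \<psi> ?e * \<psi> ?e"
      using character_mult[OF \<psi> e e] by simp
    moreover have "\<psi> ?e \<noteq> 0" using \<psi>U by auto
    ultimately have e1: "\<psi> ?e = 1" by simp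
    have "\<psi> f = f x" if "f \<in> A" for f
    proof -
      have "(\<lambda>y. f y * ?e y) = (\<lambda>y. f x * ?e y)" by (simp add: fun_eq_iff)
      then show ?thesis
        using character_mult[OF \<psi> that e] character_scale[OF \<psi> e, of "f x"] e1 by simp
    qed
    moreover have "\<psi> \<in> extensional A" using \<psi> by (simp add: characters_def)
    ultimately show "\<psi> \<in> {restrict (\<lambda>f. f x) A}" by (auto simp: extensional_def)
  qed
  ultimately show ?thesis unfolding weak_star_top_def openin_subtopology by blast
qed

end

lemma
  shows cstar_subalgebra_algA_plus: "cstar_subalgebra (algA_plus b c)"
    and one_in_algA_plus: "(\<lambda>_. 1) \<in> algA_plus b c"
    and algA_subset_algA_plus: "algA b c \<subseteq> algA_plus b c"
proof -
  let ?\<B> = "{B. cstar_subalgebra B \<and> algA b c \<subseteq> B \<and> (\<lambda>_. 1) \<in> B}"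
  have "linfty \<in> ?\<B>"
    using cstar_subalgebra_linfty by (auto simp: algA_def sup_closure_def intro: linftyI[of _ 1])
  then show "cstar_subalgebra (algA_plus b c)"
    unfolding algA_plus_def by (intro cstar_subalgebra_Inter) auto
  show "(\<lambda>_. 1) \<in> algA_plus b c" "algA b c \<subseteq> algA_plus b c"
    unfolding algA_plus_def by auto
qed

lemma indicator_in_form_domain:
  assumes "weighted_graph b c"
  shows "(\<lambda>y. if y = x then 1 else 0) \<in> form_domain b c"
proof -
  let ?e = "\<lambda>y. if y = x then 1 else 0 :: complex"
  have b_summable: "\<And>u. b u summable_on UNIV" and b_sym: "\<And>u v. b u v = b v u"
    and b_diag: "\<And>u. b u u = 0"
    using assms unfolding weighted_graph_def by auto
  text \<open>Only the edges at \<open>x\<close> contribute: one summand for each of the two orientations.\<close>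
  define row where "row = (\<lambda>(u, v). if u = x then b x v else 0)"
  define col where "col = (\<lambda>(u, v). if v = x then b u x else 0)"
  have energy: "(\<lambda>(u, v). b u v * (cmod (?e u - ?e v))\<^sup>2) = (\<lambda>p. row p + col p)"
    by (auto simp: fun_eq_iff row_def col_def b_diag)
  have "row summable_on range (Pair x)"
    by (subst summable_on_reindex) (auto simp: inj_on_def row_def o_def b_summable)
  then have row: "row summable_on UNIV"
    by (rule summable_on_cong_neutral[THEN iffD1, rotated -1]) (auto simp: row_def)
  have "col summable_on range (\<lambda>u. (u, x))"
    by (subst summable_on_reindex) (auto simp: inj_on_def col_def o_def b_summable b_sym[of _ x])
  then have col: "col summable_on UNIV"
    by (rule summable_on_cong_neutral[THEN iffD1, rotated -1]) (auto simp: col_def)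
  have "(\<lambda>u. c u * (cmod (?e u))\<^sup>2) summable_on {x}" by simp
  then have "(\<lambda>u. c u * (cmod (?e u))\<^sup>2) summable_on UNIV"
    by (rule summable_on_cong_neutral[THEN iffD1, rotated -1]) auto
  then show ?thesis
    unfolding form_domain_def using energy summable_on_add[OF row col] by simp
qed

theorem mainTheorem10:
  fixes b :: "'a::countable \<Rightarrow> 'a \<Rightarrow> real" and c :: "'a \<Rightarrow> real"
  assumes "infinite (UNIV :: 'a set)"
    and "weighted_graph b c"
    and "graph_connected b"
    and "canonically_compactifiable b c"
  shows "(\<forall>x. jmap b c x \<in> characters (algA_plus b c)) \<and>
         openin (char_space b c) (range (jmap b c)) \<and>
         (char_space b c) closure_of (range (jmap b c)) = topspace (char_space b c) \<and>
         (\<forall>x. openin (char_space b c) {jmap b c x})"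
proof -
  define A where "A = algA_plus b c"
  note A = cstar_subalgebra_algA_plus[of b c, folded A_def]
    and one = one_in_algA_plus[of b c, folded A_def]
  have j: "jmap b c = (\<lambda>x. restrict (\<lambda>f. f x) A)" by (simp add: fun_eq_iff jmap_def A_def)
  have K: "char_space b c = weak_star_top A" by (simp add: char_space_def A_def)
  have "(\<lambda>y. if y = x then 1 else 0 :: complex) \<in> linfty" for x :: 'a
    by (rule linftyI[of _ 1]) simp
  then have "(\<lambda>y. if y = x then 1 else 0) \<in> A" for x
    using sup_closure_superset[OF indicator_in_form_domain[OF \<open>weighted_graph b c\<close>], of x]
      algA_subset_algA_plus[of b c]
    unfolding algA_def A_def by blast
  then have singletons_open: "\<forall>x. openin (char_space b c) {jmap b c x}"
    unfolding K j using openin_weak_star_top_evaluation[OF A one] by blast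
  moreover have "range (jmap b c) = (\<Union>x. {jmap b c x})" by blast
  ultimately show ?thesis
    unfolding K j using evaluation_in_characters[OF A one] closure_of_evaluations[OF A one]
    by (auto simp: A_def intro: openin_Union)
qed

end
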